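(* Let $P\subseteq\{\text{monotonic},\text{topped},\text{cufi}\}$ and let $\mathbf{L}_P$ be the least predicate modal logic having all the properties in $P$. Then for every formula $\varphi$: $\varphi\in\mathbf{L}_P$ if and only if $Z\models\varphi$ for every neighborhood frame $Z$ having all the properties in $P$ (models on such frames having constant domains). In particular (for $P=\emptyset$), the least predicate modal logic is sound and complete with respect to the class of all neighborhood frames with constant domains.
   Context: Language: countable set $\mathsf{V}$ of variables, $\top,\bot$, $\land,\neg$, $\forall$, countably many $n$-ary predicate symbols for each $n\in\mathbb{N}$, and $\Box$. A predicate modal logic is a set of formulas containing all theorems of classical predicate logic, closed under substitution, modus ponens, generalization, and the rule $\varphi\equiv\psi\in\mathbf{L}\Rightarrow\Box\varphi\equiv\Box\psi\in\mathbf{L}$. It is monotonic if it contains $\Box(p\land q)\supset\Box p\land\Box q$, topped if it contains $\Box\top$, cufi if it contains $\Box p\land\Box q\supset\Box(p\land q)$. A neighborhood frame is $\langle C,\mathcal{V}\rangle$ with $C\ne\emptyset$, $\mathcal{V}:C\to\mathcal{P}(\mathcal{P}(C))$; monotonic if each $\mathcal{V}(c)$ is upward closed under $\subseteq$, topped if $C\in\mathcal{V}(c)$ for all $c$, cufi if each $\mathcal{V}(c)$ is closed under non-empty finite intersections. A model on $Z=\langle C,\mathcal{V}\rangle$ adds a non-empty domain $\mathcal{D}$ and $\mathcal{I}(c,P)\subseteq\mathcal{D}^n$; truth sets under assignments $\mathcal{A}:\mathsf{V}\to\mathcal{D}$ are classical, with $\forall$ as intersection over $x$-variants and $c\in\|\Box\varphi\|_{\mathcal{A}}$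 iff $\|\varphi\|_{\mathcal{A}}\in\mathcal{V}(c)$. $Z\models\varphi$ means $\|\varphi\|_{\mathcal{A}}=C$ for every model on $Z$ and every assignment. *)

theory Defs
  imports Main
begin

text \<open>An atomic formula Atom i ys applies the
  predicate symbol with index i and arity length ys to the variables ys; thus for each
  arity n there are countably many n-ary predicate symbols (indexed by i).\<close>

datatype fm = Top | Bot | Atom nat "nat list" | And fm fm | Neg fm | All nat fm | Box fm

definition Imp :: "fm \<Rightarrow> fm \<Rightarrow> fm" where
  "Imp a b = Neg (And a (Neg b))"

definition Iff :: "fm \<Rightarrow> fm \<Rightarrow> fm" where
  "Iff a b = And (Imp a b) (Imp b a)"

fun fv :: "fm \<Rightarrow> nat set" where
  "fv Top = {}"
| "fv Bot = {}"
| "fv (Atom i ys) = set ys"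
| "fv (And a b) = fv a \<union> fv b"
| "fv (Neg a) = fv a"
| "fv (All x a) = fv a - {x}"
| "fv (Box a) = fv a"

fun box_free :: "fm \<Rightarrow> bool" where
  "box_free (And a b) = (box_free a \<and> box_free b)"
| "box_free (Neg a) = box_free a"
| "box_free (All x a) = box_free a"
| "box_free (Box a) = False"
| "box_free _ = True"

fun vsubst :: "(nat \<Rightarrow> nat) \<Rightarrow> fm \<Rightarrow> fm" where
  "vsubst f Top = Top"
| "vsubst f Bot = Bot"
| "vsubst f (Atom i ys) = Atom i (map f ys)"
| "vsubst f (And a b) = And (vsubst f a) (vsubst f b)"
| "vsubst f (Neg a) = Neg (vsubst f a)"
| "vsubst f (All x a) = All x (vsubst (f(x := x)) a)"
| "vsubst f (Box a) = Box (vsubst f a)"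

fun vfree :: "(nat \<Rightarrow> nat) \<Rightarrow> fm \<Rightarrow> bool" where
  "vfree f (And a b) = (vfree f a \<and> vfree f b)"
| "vfree f (Neg a) = vfree f a"
| "vfree f (All x a) = (vfree (f(x := x)) a \<and> (\<forall>y \<in> fv a - {x}. f y \<noteq> x))"
| "vfree f (Box a) = vfree f a"
| "vfree f _ = True"

definition inst :: "nat list \<Rightarrow> nat list \<Rightarrow> nat \<Rightarrow> nat" where
  "inst xs ys v = (case map_of (zip xs ys) v of Some y \<Rightarrow> y | None \<Rightarrow> v)"

text \<open>A substitution sigma assigns to
  the symbol (i, n) a template (xs, psi); if xs is a list of n distinct variables, then
  each atom Atom i ys (length ys = n) is replaced by psi with xs replaced by ys.\<close>
type_synonym psub = "nat \<Rightarrow> nat \<Rightarrow> nat list \<times> fm"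

fun psubst :: "psub \<Rightarrow> fm \<Rightarrow> fm" where
  "psubst \<sigma> Top = Top"
| "psubst \<sigma> Bot = Bot"
| "psubst \<sigma> (Atom i ys) = (case \<sigma> i (length ys) of (xs, \<psi>) \<Rightarrow>
     if length xs = length ys \<and> distinct xs then vsubst (inst xs ys) \<psi> else Atom i ys)"
| "psubst \<sigma> (And a b) = And (psubst \<sigma> a) (psubst \<sigma> b)"
| "psubst \<sigma> (Neg a) = Neg (psubst \<sigma> a)"
| "psubst \<sigma> (All x a) = All x (psubst \<sigma> a)"
| "psubst \<sigma> (Box a) = Box (psubst \<sigma> a)"

text \<open>Admissibility of a predicate substitution (no variable capture); B is the set of
  variables bound in the context.\<close>
fun psfree_aux :: "nat set \<Rightarrow> psub \<Rightarrow> fm \<Rightarrow> bool" where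
  "psfree_aux B \<sigma> (Atom i ys) = (case \<sigma> i (length ys) of (xs, \<psi>) \<Rightarrow>
     (length xs = length ys \<and> distinct xs \<longrightarrow>
        vfree (inst xs ys) \<psi> \<and> (fv \<psi> - set xs) \<inter> B = {}))"
| "psfree_aux B \<sigma> (And a b) = (psfree_aux B \<sigma> a \<and> psfree_aux B \<sigma> b)"
| "psfree_aux B \<sigma> (Neg a) = psfree_aux B \<sigma> a"
| "psfree_aux B \<sigma> (All x a) = psfree_aux (insert x B) \<sigma> a"
| "psfree_aux B \<sigma> (Box a) = psfree_aux B \<sigma> a"
| "psfree_aux B \<sigma> _ = True"

definition psfree :: "psub \<Rightarrow> fm \<Rightarrow> bool" where
  "psfree \<sigma> a = psfree_aux {} \<sigma> a"

fun cl_eval :: "'d set \<Rightarrow> (nat \<Rightarrow> nat \<Rightarrow> 'd list set) \<Rightarrow> (nat \<Rightarrow> 'd) \<Rightarrow> fm \<Rightarrow> bool" where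
  "cl_eval D I A Top = True"
| "cl_eval D I A Bot = False"
| "cl_eval D I A (Atom i ys) = (map A ys \<in> I i (length ys))"
| "cl_eval D I A (And a b) = (cl_eval D I A a \<and> cl_eval D I A b)"
| "cl_eval D I A (Neg a) = (\<not> cl_eval D I A a)"
| "cl_eval D I A (All x a) = (\<forall>d \<in> D. cl_eval D I (A(x := d)) a)"
| "cl_eval D I A (Box a) = False"

text \<open>Theorems of classical predicate logic: box-free formulas true in every classical
  structure (domains taken as nonempty subsets of nat; by Loewenheim-Skolem this is
  classical validity for our countable language).\<close>
definition CPL_thm :: "fm \<Rightarrow> bool" where
  "CPL_thm a \<longleftrightarrow> box_free a \<and>
     (\<forall>(D :: nat set) I A. D \<noteq> {} \<and> (\<forall>i n. I i n \<subseteq> {l. length l = n \<and> set l \<subseteq> D})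
        \<and> (\<forall>v. A v \<in> D) \<longrightarrow> cl_eval D I A a)"

definition pml :: "fm set \<Rightarrow> bool" where
  "pml L \<longleftrightarrow>
     (\<forall>a. CPL_thm a \<longrightarrow> a \<in> L)
   \<and> (\<forall>\<sigma> a. a \<in> L \<and> psfree \<sigma> a \<longrightarrow> psubst \<sigma> a \<in> L)
   \<and> (\<forall>a b. a \<in> L \<and> Imp a b \<in> L \<longrightarrow> b \<in> L)
   \<and> (\<forall>x a. a \<in> L \<longrightarrow> All x a \<in> L)
   \<and> (\<forall>a b. Iff a b \<in> L \<longrightarrow> Iff (Box a) (Box b) \<in> L)"

datatype mprop = Monotonic | Topped | Cufi

definition pp :: fm where "pp = Atom 0 []"
definition qq :: fm where "qq = Atom 1 []"

definition axM :: fm where "axM = Imp (Box (And pp qq)) (And (Box pp) (Box qq))"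
definition axN :: fm where "axN = Box Top"
definition axC :: fm where "axC = Imp (And (Box pp) (Box qq)) (Box (And pp qq))"

definition logic_has :: "mprop set \<Rightarrow> fm set \<Rightarrow> bool" where
  "logic_has P L \<longleftrightarrow> (Monotonic \<in> P \<longrightarrow> axM \<in> L) \<and> (Topped \<in> P \<longrightarrow> axN \<in> L)
     \<and> (Cufi \<in> P \<longrightarrow> axC \<in> L)"

definition LP :: "mprop set \<Rightarrow> fm set" where
  "LP P = \<Inter> {L. pml L \<and> logic_has P L}"

definition nframe :: "'w set \<Rightarrow> ('w \<Rightarrow> 'w set set) \<Rightarrow> bool" where
  "nframe C V \<longleftrightarrow> C \<noteq> {} \<and> (\<forall>c \<in> C. V c \<subseteq> Pow C)"

definition frame_has :: "mprop set \<Rightarrow> 'w set \<Rightarrow> ('w \<Rightarrow> 'w set set) \<Rightarrow> bool" where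
  "frame_has P C V \<longleftrightarrow>
     (Monotonic \<in> P \<longrightarrow> (\<forall>c \<in> C. \<forall>X \<in> V c. \<forall>Y. X \<subseteq> Y \<and> Y \<subseteq> C \<longrightarrow> Y \<in> V c))
   \<and> (Topped \<in> P \<longrightarrow> (\<forall>c \<in> C. C \<in> V c))
   \<and> (Cufi \<in> P \<longrightarrow> (\<forall>c \<in> C. \<forall>F. finite F \<and> F \<noteq> {} \<and> F \<subseteq> V c \<longrightarrow> \<Inter>F \<in> V c))"

fun truth :: "'w set \<Rightarrow> ('w \<Rightarrow> 'w set set) \<Rightarrow> 'd set \<Rightarrow> ('w \<Rightarrow> nat \<Rightarrow> nat \<Rightarrow> 'd list set)
    \<Rightarrow> (nat \<Rightarrow> 'd) \<Rightarrow> fm \<Rightarrow> 'w set" where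
  "truth C V D I A Top = C"
| "truth C V D I A Bot = {}"
| "truth C V D I A (Atom i ys) = {c \<in> C. map A ys \<in> I c i (length ys)}"
| "truth C V D I A (And a b) = truth C V D I A a \<inter> truth C V D I A b"
| "truth C V D I A (Neg a) = C - truth C V D I A a"
| "truth C V D I A (All x a) = {c \<in> C. \<forall>d \<in> D. c \<in> truth C V D I (A(x := d)) a}"
| "truth C V D I A (Box a) = {c \<in> C. truth C V D I A a \<in> V c}"

definition is_model :: "'w set \<Rightarrow> 'd set \<Rightarrow> ('w \<Rightarrow> nat \<Rightarrow> nat \<Rightarrow> 'd list set) \<Rightarrow> bool" where
  "is_model C D I \<longleftrightarrow> D \<noteq> {} \<and> (\<forall>c \<in> C. \<forall>i n. I c i n \<subseteq> {l. length l = n \<and> set l \<subseteq> D})"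

definition fvalid :: "'w set \<Rightarrow> ('w \<Rightarrow> 'w set set) \<Rightarrow> 'd itself \<Rightarrow> fm \<Rightarrow> bool" where
  "fvalid C V _ a \<longleftrightarrow> (\<forall>(D :: 'd set) I A. is_model C D I \<and> (\<forall>v. A v \<in> D)
      \<longrightarrow> truth C V D I A a = C)"

end

theory Submission
  imports Defs "HOL-Library.Countable_Set"
begin

text \<open>
  Soundness: the formulas valid on all frames with the properties in \<open>P\<close> form a predicate
  modal logic containing the corresponding axioms. Closure under substitution holds because
  substituting formulas for predicate symbols amounts to reinterpreting the predicates by the
  truth sets of these formulas. Theorems of classical logic, defined by validity over domains
  of natural numbers, are true at every world by a downward Loewenheim-Skolem argument.

  Completeness: in the canonical model the worlds are the maximal consistent sets with
  Henkin witnesses, the individuals are the variables outside the finitely many bound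
  variables of the formula to be refuted, atoms are interpreted syntactically, and the
  neighbourhoods of a world are the proof sets of the formulas it boxes (closed upwards in
  the monotonic case). The congruence rule for \<open>Box\<close> makes this well defined, the axioms
  M, N and C yield the frame properties, and the truth lemma refutes the universal closure
  of every non-theorem.
\<close>

section \<open>Substitution and truth\<close>

instance fm :: countable by countable_datatype

fun bv :: "fm \<Rightarrow> nat set" where
  "bv (And a b) = bv a \<union> bv b"
| "bv (Neg a) = bv a"
| "bv (All x a) = insert x (bv a)"
| "bv (Box a) = bv a"
| "bv _ = {}"

definition vars :: "fm \<Rightarrow> nat set" where
  "vars a = fv a \<union> bv a"

lemma finite_fv [simp]: "finite (fv a)"
  by (induct a) auto

lemma finite_bv [simp]: "finite (bv a)"
  by (induct a) auto

lemma finite_vars [simp]: "finite (vars a)"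
  by (simp add: vars_def)

lemma bv_vsubst [simp]: "bv (vsubst f a) = bv a"
  by (induct a arbitrary: f) auto

lemma vsubst_cong: "(\<And>v. v \<in> fv a \<Longrightarrow> f v = g v) \<Longrightarrow> vsubst f a = vsubst g a"
proof (induct a arbitrary: f g)
  case (And a b)
  have "vsubst f a = vsubst g a" by (rule And.hyps(1)) (use And.prems in simp)
  moreover have "vsubst f b = vsubst g b" by (rule And.hyps(2)) (use And.prems in simp)
  ultimately show ?case by simp
next
  case (Neg a)
  have "vsubst f a = vsubst g a" by (rule Neg.hyps) (use Neg.prems in simp)
  then show ?case by simp
next
  case (Box a)
  have "vsubst f a = vsubst g a" by (rule Box.hyps) (use Box.prems in simp)
  then show ?case by simp
next
  case (All x a)
  have "vsubst (f(x := x)) a = vsubst (g(x := x)) a" by (rule All.hyps) (use All.prems in simp)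
  then show ?case by simp
qed simp_all

lemma vsubst_id [simp]: "vsubst id a = a"
proof -
  have "vsubst (\<lambda>v. v) a = a" for a :: fm
  proof -
    have upd: "(\<lambda>v. v)(x := x) = (\<lambda>v :: nat. v)" for x
      by auto
    show ?thesis by (induct a) (auto simp: upd)
  qed
  then show ?thesis by (simp add: id_def)
qed

lemma vfree_if_bv: "(\<And>v. f v \<noteq> v \<Longrightarrow> f v \<notin> bv a) \<Longrightarrow> vfree f a"
proof (induct a arbitrary: f)
  case (All x a)
  have "vfree (f(x := x)) a"
    by (rule All.hyps) (use All.prems in auto)
  moreover have "\<forall>y \<in> fv a - {x}. f y \<noteq> x"
    using All.prems by force
  ultimately show ?case by simp
qed auto

lemma vfree_id [simp]: "vfree id a"
  by (rule vfree_if_bv) auto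

lemma id_upd_same [simp]: "id(x := x) = id"
  by auto

lemma vsubst_vsubst: "vfree g a \<Longrightarrow> vsubst f (vsubst g a) = vsubst (f \<circ> g) a"
proof (induct a arbitrary: f g)
  case (All y a)
  have "vsubst (f(y := y)) (vsubst (g(y := y)) a) = vsubst (f(y := y) \<circ> g(y := y)) a"
    by (rule All.hyps) (use All.prems in \<open>simp only: vfree.simps\<close>)
  also have "\<dots> = vsubst ((f \<circ> g)(y := y)) a"
    by (rule vsubst_cong) (use All.prems in auto)
  finally show ?case by (metis vsubst.simps(6))
qed auto

lemma inst_Nil [simp]: "inst [] [] = id"
  by (auto simp: inst_def)

lemma inst_single [simp]: "inst [x] [y] = id(x := y)"
  by (auto simp: inst_def fun_eq_iff)

lemma truth_subset: "truth C V D I A a \<subseteq> C"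
  by (induct a arbitrary: A) auto

lemma truth_cong: "(\<And>v. v \<in> fv a \<Longrightarrow> A v = B v) \<Longrightarrow> truth C V D I A a = truth C V D I B a"
proof (induct a arbitrary: A B)
  case (Atom i ys)
  have eq: "map A ys = map B ys" using Atom by simp
  show ?case by (simp only: truth.simps eq)
next
  case (And a b)
  have "truth C V D I A a = truth C V D I B a" by (rule And.hyps(1)) (use And.prems in simp)
  moreover have "truth C V D I A b = truth C V D I B b" by (rule And.hyps(2)) (use And.prems in simp)
  ultimately show ?case by simp
next
  case (Neg a)
  have "truth C V D I A a = truth C V D I B a" by (rule Neg.hyps(1)) (use Neg.prems in simp)
  then show ?case by simp
next
  case (Box a)
  have "truth C V D I A a = truth C V D I B a" by (rule Box.hyps(1)) (use Box.prems in simp)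
  then show ?case by simp
next
  case (All x a)
  have "\<And>d. truth C V D I (A(x := d)) a = truth C V D I (B(x := d)) a"
    by (rule All.hyps(1)) (use All.prems in simp)
  then show ?case by simp
qed simp_all

lemma cl_eval_cong: "(\<And>v. v \<in> fv a \<Longrightarrow> A v = B v) \<Longrightarrow> cl_eval D I A a = cl_eval D I B a"
proof (induct a arbitrary: A B)
  case (Atom i ys)
  have eq: "map A ys = map B ys" using Atom by simp
  show ?case by (simp only: cl_eval.simps eq)
next
  case (And a b)
  have "cl_eval D I A a = cl_eval D I B a" by (rule And.hyps(1)) (use And.prems in simp)
  moreover have "cl_eval D I A b = cl_eval D I B b" by (rule And.hyps(2)) (use And.prems in simp)
  ultimately show ?case by simp
next
  case (Neg a)
  have "cl_eval D I A a = cl_eval D I B a" by (rule Neg.hyps(1)) (use Neg.prems in simp)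
  then show ?case by simp
next
  case (All x a)
  have "\<And>d. cl_eval D I (A(x := d)) a = cl_eval D I (B(x := d)) a"
    by (rule All.hyps(1)) (use All.prems in simp)
  then show ?case by simp
qed simp_all

lemma truth_vsubst: "vfree f a \<Longrightarrow> truth C V D I B (vsubst f a) = truth C V D I (B \<circ> f) a"
proof (induct a arbitrary: f B)
  case (All x a)
  have vn: "vfree (f(x := x)) a \<and> (\<forall>y \<in> fv a - {x}. f y \<noteq> x)" using All.prems by (metis vfree.simps(3))
  note vf = conjunct1[OF vn] and nc = conjunct2[OF vn]
  have "\<And>d. truth C V D I (B(x := d)) (vsubst (f(x := x)) a) = truth C V D I ((B(x := d)) \<circ> (f(x := x))) a"
    by (rule All.hyps[OF vf])
  also have "\<And>d. truth C V D I ((B(x := d)) \<circ> (f(x := x))) a = truth C V D I ((B \<circ> f)(x := d)) a"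
    by (rule truth_cong) (use nc in auto)
  finally show ?case unfolding comp_def by simp
qed (simp_all add: comp_def)

lemma truth_box_free: "box_free a \<Longrightarrow> c \<in> C \<Longrightarrow> c \<in> truth C V D I A a \<longleftrightarrow> cl_eval D (I c) A a"
  by (induct a arbitrary: A) auto

definition assign :: "(nat \<Rightarrow> 'd) \<Rightarrow> nat list \<Rightarrow> 'd list \<Rightarrow> nat \<Rightarrow> 'd" where
  "assign A xs ds v = (case map_of (zip xs ds) v of Some d \<Rightarrow> d | None \<Rightarrow> A v)"

lemma map_of_zip_map: "map_of (zip xs (map f ys)) v = map_option f (map_of (zip xs ys) v)"
proof (induct xs arbitrary: ys)
  case (Cons x xs)
  then show ?case by (cases ys) auto
qed simp

lemma comp_inst_eq_assign:
  assumes "length xs = length ys" and "v \<notin> set xs \<Longrightarrow> B v = A v"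
  shows "(B \<circ> inst xs ys) v = assign A xs (map B ys) v"
proof (cases "map_of (zip xs ys) v")
  case None
  then have "v \<notin> set xs" using assms(1) by simp
  then show ?thesis using None assms(2) by (simp add: assign_def inst_def map_of_zip_map)
qed (simp add: assign_def inst_def map_of_zip_map)

text \<open>The interpretation that makes an atom true exactly where the formula substituted for
  it by \<open>\<sigma>\<close> is true; the assignment \<open>A\<close> supplies the values of the parameters of that formula.\<close>

definition subst_interp :: "'w set \<Rightarrow> ('w \<Rightarrow> 'w set set) \<Rightarrow> 'd set \<Rightarrow> ('w \<Rightarrow> nat \<Rightarrow> nat \<Rightarrow> 'd list set)
    \<Rightarrow> (nat \<Rightarrow> 'd) \<Rightarrow> psub \<Rightarrow> 'w \<Rightarrow> nat \<Rightarrow> nat \<Rightarrow> 'd list set" where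
  "subst_interp C V D I A \<sigma> c i n = {ds. length ds = n \<and> set ds \<subseteq> D \<and> (case \<sigma> i n of (xs, \<psi>) \<Rightarrow>
      if length xs = n \<and> distinct xs then c \<in> truth C V D I (assign A xs ds) \<psi> else ds \<in> I c i n)}"

lemma is_model_subst_interp: "is_model C D I \<Longrightarrow> is_model C D (subst_interp C V D I A \<sigma>)"
  unfolding is_model_def subst_interp_def by auto

lemma truth_psubst_aux:
  assumes "psfree_aux Bs \<sigma> b" "is_model C D I" "\<forall>v. B v \<in> D" "\<forall>v. v \<notin> Bs \<longrightarrow> B v = A v"
  shows "truth C V D I B (psubst \<sigma> b) = truth C V D (subst_interp C V D I A \<sigma>) B b"
  using assms
proof (induct b arbitrary: Bs B)
  case (Atom i ys)
  obtain xs \<psi> where \<sigma>: "\<sigma> i (length ys) = (xs, \<psi>)" by force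
  show ?case
  proof (cases "length xs = length ys \<and> distinct xs")
    case True
    have vf: "vfree (inst xs ys) \<psi>" and nb: "(fv \<psi> - set xs) \<inter> Bs = {}"
      using Atom.prems(1) \<sigma> True by auto
    have "truth C V D I B (psubst \<sigma> (Atom i ys)) = truth C V D I (B \<circ> inst xs ys) \<psi>"
      using \<sigma> True truth_vsubst[OF vf] by simp
    also have "\<dots> = truth C V D I (assign A xs (map B ys)) \<psi>"
      by (rule truth_cong, rule comp_inst_eq_assign) (use True nb Atom.prems(4) in auto)
    also have "\<dots> = truth C V D (subst_interp C V D I A \<sigma>) B (Atom i ys)"
      using \<sigma> True Atom.prems(3) truth_subset[of C V D I "assign A xs (map B ys)" \<psi>]
      by (auto simp: subst_interp_def)
    finally show ?thesis .
  next
    case False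
    then show ?thesis using \<sigma> Atom.prems(2,3) by (auto simp: subst_interp_def is_model_def)
  qed
next
  case (And a b)
  have "truth C V D I B (psubst \<sigma> a) = truth C V D (subst_interp C V D I A \<sigma>) B a"
    by (rule And.hyps(1)[of Bs]) (use And.prems in auto)
  moreover have "truth C V D I B (psubst \<sigma> b) = truth C V D (subst_interp C V D I A \<sigma>) B b"
    by (rule And.hyps(2)[of Bs]) (use And.prems in auto)
  ultimately show ?case by simp
next
  case (All x a)
  have "truth C V D I (B(x := d)) (psubst \<sigma> a) = truth C V D (subst_interp C V D I A \<sigma>) (B(x := d)) a"
    if "d \<in> D" for d
    by (rule All.hyps[of "insert x Bs"]) (use All.prems that in auto)
  then show ?case by simp
qed simp_all

lemma truth_psubst:
  assumes "psfree \<sigma> b" "is_model C D I" "\<forall>v. A v \<in> D"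
  shows "truth C V D I A (psubst \<sigma> b) = truth C V D (subst_interp C V D I A \<sigma>) A b"
  using assms by (intro truth_psubst_aux[where Bs = "{}"]) (auto simp: psfree_def)

section \<open>Downward Loewenheim-Skolem\<close>

definition counterex :: "'d set \<Rightarrow> (nat \<Rightarrow> nat \<Rightarrow> 'd list set) \<Rightarrow> 'd \<Rightarrow> fm \<Rightarrow> nat \<Rightarrow> (nat \<Rightarrow> 'd) \<Rightarrow> 'd" where
  "counterex D J d0 b x B = (if \<exists>d \<in> D. \<not> cl_eval D J (B(x := d)) b
     then SOME d. d \<in> D \<and> \<not> cl_eval D J (B(x := d)) b else d0)"

definition list_asg :: "'d \<Rightarrow> 'd list \<Rightarrow> nat \<Rightarrow> 'd" where
  "list_asg d0 ds v = (if v < length ds then ds ! v else d0)"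

text \<open>Stage \<open>n + 1\<close> adds a counterexample for every formula \<open>All x b\<close> false under an
  assignment of stage-\<open>n\<close> elements to the variables; since only finitely many variables
  matter, such assignments are coded by lists.\<close>

primrec skolem_stage :: "'d set \<Rightarrow> (nat \<Rightarrow> nat \<Rightarrow> 'd list set) \<Rightarrow> 'd \<Rightarrow> (nat \<Rightarrow> 'd) \<Rightarrow> nat \<Rightarrow> 'd set" where
  "skolem_stage D J d0 A 0 = insert d0 (range A)"
| "skolem_stage D J d0 A (Suc n) = skolem_stage D J d0 A n \<union>
     (\<lambda>(b, x, ds). counterex D J d0 b x (list_asg d0 ds)) ` (UNIV \<times> UNIV \<times> lists (skolem_stage D J d0 A n))"

definition skolem_hull :: "'d set \<Rightarrow> (nat \<Rightarrow> nat \<Rightarrow> 'd list set) \<Rightarrow> 'd \<Rightarrow> (nat \<Rightarrow> 'd) \<Rightarrow> 'd set" where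
  "skolem_hull D J d0 A = (\<Union>n. skolem_stage D J d0 A n)"

lemma countable_skolem_hull: "countable (skolem_hull D J d0 A)"
proof -
  have "countable (skolem_stage D J d0 A n)" for n
    by (induct n) auto
  then show ?thesis
    unfolding skolem_hull_def by blast
qed

lemma range_subset_skolem_hull: "range A \<subseteq> skolem_hull D J d0 A"
  unfolding skolem_hull_def using skolem_stage.simps(1)[of D J d0 A] by blast

lemma skolem_stage_mono: "m \<le> n \<Longrightarrow> skolem_stage D J d0 A m \<subseteq> skolem_stage D J d0 A n"
  by (rule lift_Suc_mono_le[where f = "skolem_stage D J d0 A"]) auto

lemma counterex_in: "d0 \<in> D \<Longrightarrow> counterex D J d0 b x B \<in> D"
  unfolding counterex_def by (metis (mono_tags, lifting) someI_ex)

lemma skolem_hull_subset: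
  assumes "d0 \<in> D" "range A \<subseteq> D"
  shows "skolem_hull D J d0 A \<subseteq> D"
proof -
  have "skolem_stage D J d0 A n \<subseteq> D" for n
  proof (induct n)
    case (Suc n)
    have "(\<lambda>(b, x, ds). counterex D J d0 b x (list_asg d0 ds)) ` X \<subseteq> D" for X
      using counterex_in[OF assms(1)] by auto
    then show ?case using Suc by simp
  qed (use assms in simp)
  then show ?thesis
    unfolding skolem_hull_def by blast
qed

lemma list_in_skolem_stage:
  "set ds \<subseteq> skolem_hull D J d0 A \<Longrightarrow> \<exists>n. set ds \<subseteq> skolem_stage D J d0 A n"
proof (induct ds)
  case (Cons d ds)
  then obtain n m where "set ds \<subseteq> skolem_stage D J d0 A n" "d \<in> skolem_stage D J d0 A m"
    by (auto simp: skolem_hull_def)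
  then have "set (d # ds) \<subseteq> skolem_stage D J d0 A (max n m)"
    using skolem_stage_mono[of n "max n m" D J d0 A] skolem_stage_mono[of m "max n m" D J d0 A]
    by auto
  then show ?case by blast
qed simp

lemma skolem_hull_counterex:
  assumes B: "\<forall>v. B v \<in> skolem_hull D J d0 A"
    and d: "d \<in> D" "\<not> cl_eval D J (B(x := d)) b"
  shows "\<exists>d' \<in> skolem_hull D J d0 A. \<not> cl_eval D J (B(x := d')) b"
proof -
  define k where "k = Suc (Max (insert 0 (fv b)))"
  have k: "v < k" if "v \<in> fv b" for v
  proof -
    have "v \<le> Max (insert 0 (fv b))" using that by (intro Max_ge) auto
    then show ?thesis unfolding k_def by simp
  qed
  define ds where "ds = map B [0..<k]"
  have "set ds \<subseteq> skolem_hull D J d0 A"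
    using B unfolding ds_def by auto
  then obtain n where n: "set ds \<subseteq> skolem_stage D J d0 A n"
    using list_in_skolem_stage[of ds D J d0 A] by blast
  have agree: "cl_eval D J ((list_asg d0 ds)(x := e)) b = cl_eval D J (B(x := e)) b" for e
    by (rule cl_eval_cong) (simp add: list_asg_def ds_def k)
  let ?w = "counterex D J d0 b x (list_asg d0 ds)"
  have ex: "\<exists>d. d \<in> D \<and> \<not> cl_eval D J ((list_asg d0 ds)(x := d)) b"
    using d agree[of d] by auto
  then have "?w = (SOME d. d \<in> D \<and> \<not> cl_eval D J ((list_asg d0 ds)(x := d)) b)"
    unfolding counterex_def by auto
  then have "\<not> cl_eval D J ((list_asg d0 ds)(x := ?w)) b"
    using someI_ex[OF ex] by simp
  then have "\<not> cl_eval D J (B(x := ?w)) b"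
    using agree[of ?w] by simp
  moreover have "(b, x, ds) \<in> UNIV \<times> UNIV \<times> lists (skolem_stage D J d0 A n)"
    using n by auto
  then have "?w \<in> skolem_stage D J d0 A (Suc n)"
    unfolding skolem_stage.simps by (intro UnI2 rev_image_eqI[of "(b, x, ds)"]) simp_all
  ultimately show ?thesis
    unfolding skolem_hull_def by blast
qed

lemma cl_eval_skolem_hull:
  assumes "d0 \<in> D" "range A \<subseteq> D"
  shows "\<forall>v. B v \<in> skolem_hull D J d0 A \<Longrightarrow> cl_eval (skolem_hull D J d0 A) J B b = cl_eval D J B b"
proof (induct b arbitrary: B)
  case (All x b)
  let ?S = "skolem_hull D J d0 A"
  have IH: "cl_eval ?S J (B(x := d)) b = cl_eval D J (B(x := d)) b" if "d \<in> ?S" for d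
    by (rule All.hyps) (use All.prems that in simp)
  have "(\<forall>d \<in> ?S. cl_eval D J (B(x := d)) b) \<longleftrightarrow> (\<forall>d \<in> D. cl_eval D J (B(x := d)) b)"
    using skolem_hull_counterex[OF All.prems] skolem_hull_subset[OF assms] by blast
  then show ?case
    using IH by simp
qed simp_all

lemma cl_eval_inj_image:
  assumes inj: "inj_on f S"
  shows "\<forall>v. B v \<in> S \<Longrightarrow>
    cl_eval (f ` S) (\<lambda>i n. map f ` {ds \<in> J i n. set ds \<subseteq> S}) (f \<circ> B) b = cl_eval S J B b"
proof (induct b arbitrary: B)
  case (Atom i ys)
  have B: "set (map B ys) \<subseteq> S" using Atom by auto
  have "map B ys = ds" if "set ds \<subseteq> S" "map f (map B ys) = map f ds" for ds
  proof -
    have "inj_on f (set (map B ys) \<union> set ds)"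
      using inj by (rule inj_on_subset) (use B that in simp)
    then show ?thesis using that inj_on_map_eq_map by blast
  qed
  then have "map f (map B ys) \<in> map f ` {ds \<in> J i (length ys). set ds \<subseteq> S} \<longleftrightarrow> map B ys \<in> J i (length ys)"
    using B by blast
  then show ?case by (simp add: comp_def)
next
  case (All x b)
  let ?J = "\<lambda>i n. map f ` {ds \<in> J i n. set ds \<subseteq> S}"
  have eq: "cl_eval (f ` S) ?J ((f \<circ> B)(x := f d)) b = cl_eval S J (B(x := d)) b" if "d \<in> S" for d
  proof -
    have "(f \<circ> B)(x := f d) = f \<circ> (B(x := d))" by (auto simp: fun_eq_iff)
    moreover have "\<forall>v. (B(x := d)) v \<in> S" using All.prems that by simp
    ultimately show ?thesis using All.hyps by (simp only:)
  qed
  have "(\<forall>d' \<in> f ` S. cl_eval (f ` S) ?J ((f \<circ> B)(x := d')) b)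
      \<longleftrightarrow> (\<forall>d \<in> S. cl_eval (f ` S) ?J ((f \<circ> B)(x := f d)) b)"
    by blast
  also have "\<dots> \<longleftrightarrow> (\<forall>d \<in> S. cl_eval S J (B(x := d)) b)"
    using eq by (simp cong: ball_cong)
  finally show ?case by (simp only: cl_eval.simps)
qed simp_all

lemma cl_eval_CPL_thm:
  assumes cpl: "CPL_thm a" and D: "D \<noteq> {}" and J: "\<forall>i n. J i n \<subseteq> {ds. length ds = n \<and> set ds \<subseteq> D}"
    and A: "\<forall>v. A v \<in> D"
  shows "cl_eval D J A a"
proof -
  obtain d0 where d0: "d0 \<in> D" using D by auto
  have rA: "range A \<subseteq> D" using A by auto
  define S where "S = skolem_hull D J d0 A"
  define f where "f = to_nat_on S"
  define J' where "J' = (\<lambda>i n. map f ` {ds \<in> J i n. set ds \<subseteq> S})"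
  have inj: "inj_on f S"
    unfolding f_def S_def by (rule inj_on_to_nat_on[OF countable_skolem_hull])
  have AS: "\<forall>v. A v \<in> S"
    using range_subset_skolem_hull[of A D J d0] unfolding S_def by blast
  have nat_valid: "cl_eval D' I B a"
    if "D' \<noteq> {}" "\<forall>i n. I i n \<subseteq> {l. length l = n \<and> set l \<subseteq> D'}" "\<forall>v. B v \<in> D'" for D' :: "nat set" and I B
    using cpl that unfolding CPL_thm_def by blast
  have "f ` S \<noteq> {}" using AS by auto
  moreover have "\<forall>i n. J' i n \<subseteq> {ds. length ds = n \<and> set ds \<subseteq> f ` S}"
  proof (intro allI subsetI)
    fix i n ds'
    assume "ds' \<in> J' i n"
    then obtain ds where "ds \<in> J i n" "set ds \<subseteq> S" "ds' = map f ds" unfolding J'_def by blast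
    then show "ds' \<in> {ds. length ds = n \<and> set ds \<subseteq> f ` S}" using J by auto
  qed
  moreover have "\<forall>v. (f \<circ> A) v \<in> f ` S" using AS by auto
  ultimately have "cl_eval (f ` S) J' (f \<circ> A) a"
    by (rule nat_valid)
  then have "cl_eval S J A a"
    unfolding J'_def cl_eval_inj_image[OF inj AS] .
  then show ?thesis
    using cl_eval_skolem_hull[OF d0 rA, of A J a] AS unfolding S_def by simp
qed

section \<open>Soundness\<close>

definition valid_fms :: "mprop set \<Rightarrow> 'w itself \<Rightarrow> 'd itself \<Rightarrow> fm set" where
  "valid_fms P W T = {a. \<forall>(C :: 'w set) V. nframe C V \<and> frame_has P C V \<longrightarrow> fvalid C V TYPE('d) a}"

lemma valid_fmsI:
  assumes "\<And>(C :: 'w set) V (D :: 'd set) I A. nframe C V \<Longrightarrow> frame_has P C V \<Longrightarrow> is_model C D I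
    \<Longrightarrow> \<forall>v. A v \<in> D \<Longrightarrow> truth C V D I A a = C"
  shows "a \<in> valid_fms P TYPE('w) TYPE('d)"
  using assms unfolding valid_fms_def fvalid_def by blast

lemma valid_fmsD:
  assumes "a \<in> valid_fms P TYPE('w) TYPE('d)" "nframe (C :: 'w set) V" "frame_has P C V"
    "is_model C (D :: 'd set) I" "\<forall>v. A v \<in> D"
  shows "truth C V D I A a = C"
  using assms unfolding valid_fms_def fvalid_def by blast

lemma truth_Imp: "truth C V D I A (Imp a b) = C - (truth C V D I A a - truth C V D I A b)"
  using truth_subset[of C V D I A a] by (auto simp: Imp_def)

lemma truth_Imp_eq_iff: "truth C V D I A (Imp a b) = C \<longleftrightarrow> truth C V D I A a \<subseteq> truth C V D I A b"
  unfolding truth_Imp using truth_subset[of C V D I A a] by blast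

lemma truth_Iff_eq_iff: "truth C V D I A (Iff a b) = C \<longleftrightarrow> truth C V D I A a = truth C V D I A b"
  using truth_subset[of C V D I A a] truth_subset[of C V D I A b]
  by (auto simp: Iff_def truth_Imp)

lemma CPL_thm_valid: "CPL_thm a \<Longrightarrow> a \<in> valid_fms P TYPE('w) TYPE('d)"
proof (rule valid_fmsI)
  fix C :: "'w set" and V and D :: "'d set" and I and A :: "nat \<Rightarrow> 'd"
  assume cpl: "CPL_thm a" and m: "is_model C D I" and A: "\<forall>v. A v \<in> D"
  have bf: "box_free a" using cpl unfolding CPL_thm_def by simp
  have "c \<in> truth C V D I A a" if c: "c \<in> C" for c
  proof -
    have "cl_eval D (I c) A a"
      by (rule cl_eval_CPL_thm[OF cpl]) (use m A c in \<open>auto simp: is_model_def\<close>)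
    then show ?thesis using truth_box_free[OF bf c, of V D I A] by simp
  qed
  then show "truth C V D I A a = C"
    using truth_subset[of C V D I A a] by blast
qed

lemma psubst_valid:
  assumes "a \<in> valid_fms P TYPE('w) TYPE('d)" "psfree \<sigma> a"
  shows "psubst \<sigma> a \<in> valid_fms P TYPE('w) TYPE('d)"
proof (rule valid_fmsI)
  fix C :: "'w set" and V and D :: "'d set" and I and A :: "nat \<Rightarrow> 'd"
  assume "nframe C V" "frame_has P C V" and m: "is_model C D I" and A: "\<forall>v. A v \<in> D"
  then show "truth C V D I A (psubst \<sigma> a) = C"
    using truth_psubst[OF assms(2) m A] is_model_subst_interp[OF m] valid_fmsD[OF assms(1)] by simp
qed

lemma MP_valid:
  assumes "a \<in> valid_fms P TYPE('w) TYPE('d)" "Imp a b \<in> valid_fms P TYPE('w) TYPE('d)"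
  shows "b \<in> valid_fms P TYPE('w) TYPE('d)"
proof (rule valid_fmsI)
  fix C :: "'w set" and V and D :: "'d set" and I and A :: "nat \<Rightarrow> 'd"
  assume fr: "nframe C V" "frame_has P C V" and m: "is_model C D I" "\<forall>v. A v \<in> D"
  have "truth C V D I A a = C"
    by (rule valid_fmsD[OF assms(1) fr m])
  moreover have "truth C V D I A a \<subseteq> truth C V D I A b"
    using valid_fmsD[OF assms(2) fr m] by (simp only: truth_Imp_eq_iff)
  ultimately show "truth C V D I A b = C"
    using truth_subset[of C V D I A b] by blast
qed

lemma All_valid:
  assumes "a \<in> valid_fms P TYPE('w) TYPE('d)"
  shows "All x a \<in> valid_fms P TYPE('w) TYPE('d)"
proof (rule valid_fmsI)
  fix C :: "'w set" and V and D :: "'d set" and I and A :: "nat \<Rightarrow> 'd"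
  assume "nframe C V" "frame_has P C V" "is_model C D I" and A: "\<forall>v. A v \<in> D"
  then have "truth C V D I (A(x := d)) a = C" if "d \<in> D" for d
    using valid_fmsD[OF assms] that by simp
  then show "truth C V D I A (All x a) = C"
    by (auto simp del: fun_upd_apply)
qed

lemma Box_cong_valid:
  assumes "Iff a b \<in> valid_fms P TYPE('w) TYPE('d)"
  shows "Iff (Box a) (Box b) \<in> valid_fms P TYPE('w) TYPE('d)"
proof (rule valid_fmsI)
  fix C :: "'w set" and V and D :: "'d set" and I and A :: "nat \<Rightarrow> 'd"
  assume fr: "nframe C V" "frame_has P C V" and m: "is_model C D I" "\<forall>v. A v \<in> D"
  have "truth C V D I A a = truth C V D I A b"
    using valid_fmsD[OF assms fr m] by (simp only: truth_Iff_eq_iff)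
  then show "truth C V D I A (Iff (Box a) (Box b)) = C"
    by (simp only: truth_Iff_eq_iff truth.simps)
qed

lemma pml_valid_fms: "pml (valid_fms P TYPE('w) TYPE('d))"
  unfolding pml_def
  by (intro conjI allI impI; (elim conjE)?)
    (erule CPL_thm_valid | erule (1) psubst_valid | erule (1) MP_valid | erule All_valid
      | erule Box_cong_valid)+

lemma axM_valid: "Monotonic \<in> P \<Longrightarrow> axM \<in> valid_fms P TYPE('w) TYPE('d)"
proof (rule valid_fmsI)
  fix C :: "'w set" and V and D :: "'d set" and I :: "'w \<Rightarrow> nat \<Rightarrow> nat \<Rightarrow> 'd list set"
    and A :: "nat \<Rightarrow> 'd"
  assume "Monotonic \<in> P" "frame_has P C V"
  then have mono: "\<forall>c \<in> C. \<forall>X \<in> V c. \<forall>Y. X \<subseteq> Y \<and> Y \<subseteq> C \<longrightarrow> Y \<in> V c"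
    unfolding frame_has_def by simp
  let ?X = "{c \<in> C. [] \<in> I c 0 0}" and ?Y = "{c \<in> C. [] \<in> I c 1 0}"
  have "?X \<in> V c \<and> ?Y \<in> V c" if "c \<in> C" "?X \<inter> ?Y \<in> V c" for c
  proof -
    have "\<forall>Z. ?X \<inter> ?Y \<subseteq> Z \<and> Z \<subseteq> C \<longrightarrow> Z \<in> V c" using mono that by blast
    moreover have "?X \<inter> ?Y \<subseteq> ?X" "?X \<inter> ?Y \<subseteq> ?Y" "?X \<subseteq> C" "?Y \<subseteq> C" by auto
    ultimately show ?thesis by blast
  qed
  then show "truth C V D I A axM = C"
    unfolding axM_def truth_Imp_eq_iff pp_def qq_def by auto
qed

lemma axN_valid: "Topped \<in> P \<Longrightarrow> axN \<in> valid_fms P TYPE('w) TYPE('d)"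
proof (rule valid_fmsI)
  fix C :: "'w set" and V and D :: "'d set" and I and A :: "nat \<Rightarrow> 'd"
  assume "Topped \<in> P" "frame_has P C V"
  then have "\<forall>c \<in> C. C \<in> V c"
    unfolding frame_has_def by simp
  then show "truth C V D I A axN = C"
    unfolding axN_def by auto
qed

lemma axC_valid: "Cufi \<in> P \<Longrightarrow> axC \<in> valid_fms P TYPE('w) TYPE('d)"
proof (rule valid_fmsI)
  fix C :: "'w set" and V and D :: "'d set" and I :: "'w \<Rightarrow> nat \<Rightarrow> nat \<Rightarrow> 'd list set"
    and A :: "nat \<Rightarrow> 'd"
  assume "Cufi \<in> P" "frame_has P C V"
  then have cufi: "\<forall>c \<in> C. \<forall>F. finite F \<and> F \<noteq> {} \<and> F \<subseteq> V c \<longrightarrow> \<Inter>F \<in> V c"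
    unfolding frame_has_def by simp
  let ?X = "{c \<in> C. [] \<in> I c 0 0}" and ?Y = "{c \<in> C. [] \<in> I c 1 0}"
  have "?X \<inter> ?Y \<in> V c" if "c \<in> C" "?X \<in> V c" "?Y \<in> V c" for c
  proof -
    have "finite {?X, ?Y} \<and> {?X, ?Y} \<noteq> {} \<and> {?X, ?Y} \<subseteq> V c" using that by simp
    then have "\<Inter>{?X, ?Y} \<in> V c" using cufi that(1) by blast
    then show ?thesis by simp
  qed
  then show "truth C V D I A axC = C"
    unfolding axC_def truth_Imp_eq_iff pp_def qq_def by auto
qed

lemma logic_has_valid_fms: "logic_has P (valid_fms P TYPE('w) TYPE('d))"
  unfolding logic_has_def using axM_valid axN_valid axC_valid by blast

theorem LP_subset_valid_fms: "LP P \<subseteq> valid_fms P TYPE('w) TYPE('d)"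
  unfolding LP_def by (rule Inter_lower) (simp add: pml_valid_fms logic_has_valid_fms)

section \<open>Derived rules and maximal consistent sets\<close>

fun prop_eval :: "(fm \<Rightarrow> bool) \<Rightarrow> fm \<Rightarrow> bool" where
  "prop_eval v Top = True"
| "prop_eval v Bot = False"
| "prop_eval v (And a b) = (prop_eval v a \<and> prop_eval v b)"
| "prop_eval v (Neg a) = (\<not> prop_eval v a)"
| "prop_eval v (Atom i ys) = v (Atom i ys)"
| "prop_eval v (All x a) = v (All x a)"
| "prop_eval v (Box a) = v (Box a)"

fun prop_skel :: "fm \<Rightarrow> fm" where
  "prop_skel Top = Top"
| "prop_skel Bot = Bot"
| "prop_skel (And a b) = And (prop_skel a) (prop_skel b)"
| "prop_skel (Neg a) = Neg (prop_skel a)"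
| "prop_skel (Atom i ys) = Atom (to_nat (Atom i ys)) []"
| "prop_skel (All x a) = Atom (to_nat (All x a)) []"
| "prop_skel (Box a) = Atom (to_nat (Box a)) []"

definition skel_subst :: psub where "skel_subst i n = ([], from_nat i)"

lemma psubst_prop_skel: "psubst skel_subst (prop_skel a) = a"
  by (induct a) (simp_all add: skel_subst_def)

lemma psfree_prop_skel: "psfree_aux {} skel_subst (prop_skel a)"
  by (induct a) (simp_all add: skel_subst_def)

lemma box_free_prop_skel: "box_free (prop_skel a)"
  by (induct a) simp_all

lemma cl_eval_prop_skel: "cl_eval D I A (prop_skel a) = prop_eval (\<lambda>b. [] \<in> I (to_nat b) 0) a"
  by (induct a) simp_all

lemma pml_CPL_thm: "pml L \<Longrightarrow> CPL_thm a \<Longrightarrow> a \<in> L"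
  unfolding pml_def by blast

lemma pml_psubst: "pml L \<Longrightarrow> a \<in> L \<Longrightarrow> psfree \<sigma> a \<Longrightarrow> psubst \<sigma> a \<in> L"
  unfolding pml_def by blast

lemma pml_MP: "pml L \<Longrightarrow> a \<in> L \<Longrightarrow> Imp a b \<in> L \<Longrightarrow> b \<in> L"
  unfolding pml_def by blast

lemma pml_All: "pml L \<Longrightarrow> a \<in> L \<Longrightarrow> All x a \<in> L"
  unfolding pml_def by blast

lemma pml_Box_cong: "pml L \<Longrightarrow> Iff a b \<in> L \<Longrightarrow> Iff (Box a) (Box b) \<in> L"
  unfolding pml_def by blast

text \<open>A tautology is a substitution instance of its propositional skeleton, in which the
  maximal non-propositional subformulas are replaced by distinct nullary atoms.\<close>

lemma pml_taut:
  assumes L: "pml L" and t: "\<And>v. prop_eval v a"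
  shows "a \<in> L"
proof -
  have "CPL_thm (prop_skel a)" unfolding CPL_thm_def
    using t by (simp add: box_free_prop_skel cl_eval_prop_skel)
  then have "prop_skel a \<in> L" by (rule pml_CPL_thm[OF L])
  then have "psubst skel_subst (prop_skel a) \<in> L"
    by (rule pml_psubst[OF L]) (simp add: psfree_def psfree_prop_skel)
  then show ?thesis by (simp add: psubst_prop_skel)
qed

lemma prop_eval_Imp[simp]: "prop_eval v (Imp a b) = (prop_eval v a \<longrightarrow> prop_eval v b)"
  by (simp add: Imp_def)

lemma prop_eval_Iff[simp]: "prop_eval v (Iff a b) = (prop_eval v a \<longleftrightarrow> prop_eval v b)"
  by (auto simp add: Iff_def)

fun Conj :: "fm list \<Rightarrow> fm" where
  "Conj [] = Top"
| "Conj (a # as) = And a (Conj as)"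

lemma prop_eval_Conj[simp]: "prop_eval v (Conj as) = (\<forall>a\<in>set as. prop_eval v a)"
  by (induct as) auto

lemma pml_Conj: "pml L \<Longrightarrow> set as \<subseteq> L \<Longrightarrow> Conj as \<in> L"
proof (induct as)
  case Nil then show ?case by (simp add: pml_taut)
next
  case (Cons a as)
  have a: "a \<in> L" and c: "Conj as \<in> L" using Cons by auto
  have "Imp a (Imp (Conj as) (And a (Conj as))) \<in> L" by (rule pml_taut[OF Cons.prems(1)]) simp
  then have "Imp (Conj as) (And a (Conj as)) \<in> L" by (rule pml_MP[OF Cons.prems(1) a])
  then show ?case using pml_MP[OF Cons.prems(1) c] by simp
qed

lemma pml_prop_conseq:
  assumes L: "pml L" and as: "set as \<subseteq> L" and t: "\<And>v. (\<forall>a\<in>set as. prop_eval v a) \<Longrightarrow> prop_eval v b"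
  shows "b \<in> L"
proof -
  have "Imp (Conj as) b \<in> L" by (rule pml_taut[OF L]) (simp add: t)
  then show ?thesis by (rule pml_MP[OF L pml_Conj[OF L as]])
qed

definition consistent :: "fm set \<Rightarrow> fm set \<Rightarrow> bool" where
  "consistent L G \<longleftrightarrow> (\<forall>gs. set gs \<subseteq> G \<longrightarrow> Neg (Conj gs) \<notin> L)"

definition maxcons :: "fm set \<Rightarrow> fm set \<Rightarrow> bool" where
  "maxcons L G \<longleftrightarrow> consistent L G \<and> (\<forall>a. a \<in> G \<or> Neg a \<in> G)"

lemma consistent_mono: "G \<subseteq> H \<Longrightarrow> consistent L H \<Longrightarrow> consistent L G"
  unfolding consistent_def by blast

lemma consistentD: "consistent L G \<Longrightarrow> set gs \<subseteq> G \<Longrightarrow> Neg (Conj gs) \<in> L \<Longrightarrow> False"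
  unfolding consistent_def by blast

lemma consistent_insert_or_Neg:
  assumes L: "pml L" and c: "consistent L G"
  shows "consistent L (insert a G) \<or> consistent L (insert (Neg a) G)"
proof (rule ccontr)
  assume "\<not> (consistent L (insert a G) \<or> consistent L (insert (Neg a) G))"
  then obtain gs1 gs2 where g1: "set gs1 \<subseteq> insert a G" "Neg (Conj gs1) \<in> L"
    and g2: "set gs2 \<subseteq> insert (Neg a) G" "Neg (Conj gs2) \<in> L"
    unfolding consistent_def by blast
  let ?hs = "filter (\<lambda>g. g \<noteq> a) gs1 @ filter (\<lambda>g. g \<noteq> Neg a) gs2"
  have hs: "set ?hs \<subseteq> G" using g1(1) g2(1) by auto
  have "Neg (Conj ?hs) \<in> L"
  proof (rule pml_prop_conseq[OF L, of "[Neg (Conj gs1), Neg (Conj gs2)]"])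
    show "set [Neg (Conj gs1), Neg (Conj gs2)] \<subseteq> L" using g1 g2 by simp
  next
    fix v assume "\<forall>b\<in>set [Neg (Conj gs1), Neg (Conj gs2)]. prop_eval v b"
    then have n1: "\<not> (\<forall>g\<in>set gs1. prop_eval v g)" and n2: "\<not> (\<forall>g\<in>set gs2. prop_eval v g)" by simp_all
    show "prop_eval v (Neg (Conj ?hs))"
    proof (cases "prop_eval v a")
      case True
      then show ?thesis using n1 by auto
    next
      case False
      then show ?thesis using n2 by auto
    qed
  qed
  then show False using consistentD[OF c hs] by blast
qed

lemma maxcons_prop_conseq:
  assumes L: "pml L" and w: "maxcons L w" and as: "set as \<subseteq> w"
    and t: "\<And>v. (\<forall>a\<in>set as. prop_eval v a) \<Longrightarrow> prop_eval v b"
  shows "b \<in> w"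
proof (rule ccontr)
  assume "b \<notin> w"
  then have nb: "Neg b \<in> w" using w unfolding maxcons_def by blast
  have "Neg (Conj (Neg b # as)) \<in> L" by (rule pml_taut[OF L]) (use t in auto)
  moreover have "set (Neg b # as) \<subseteq> w" using nb as by simp
  ultimately show False using consistentD w unfolding maxcons_def by blast
qed

lemma maxcons_logic:
  assumes L: "pml L" and w: "maxcons L w" and a: "a \<in> L"
  shows "a \<in> w"
proof (rule ccontr)
  assume "a \<notin> w"
  then have "set [Neg a] \<subseteq> w" using w unfolding maxcons_def by auto
  moreover have "Neg (Conj [Neg a]) \<in> L" by (rule pml_prop_conseq[OF L, of "[a]"]) (use a in auto)
  ultimately show False using consistentD w unfolding maxcons_def by blast
qed

lemma maxcons_MP:
  assumes L: "pml L" and w: "maxcons L w" and a: "a \<in> w" and ab: "Imp a b \<in> L"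
  shows "b \<in> w"
  using a maxcons_logic[OF L w ab] by (intro maxcons_prop_conseq[OF L w, of "[a, Imp a b]"]) auto

lemma maxcons_Neg:
  assumes L: "pml L" and w: "maxcons L w"
  shows "Neg a \<in> w \<longleftrightarrow> a \<notin> w"
proof -
  have "Neg (Conj [a, Neg a]) \<in> L" by (rule pml_taut[OF L]) simp
  then have "\<not> set [a, Neg a] \<subseteq> w" using consistentD w unfolding maxcons_def by blast
  moreover have "a \<in> w \<or> Neg a \<in> w" using w unfolding maxcons_def by blast
  ultimately show ?thesis by auto
qed

lemma maxcons_And:
  assumes L: "pml L" and w: "maxcons L w"
  shows "And a b \<in> w \<longleftrightarrow> a \<in> w \<and> b \<in> w"
proof
  assume "And a b \<in> w"
  then show "a \<in> w \<and> b \<in> w"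
    by (auto intro: maxcons_prop_conseq[OF L w, of "[And a b]"])
next
  assume "a \<in> w \<and> b \<in> w"
  then show "And a b \<in> w" by (intro maxcons_prop_conseq[OF L w, of "[a, b]"]) auto
qed

lemma maxcons_Top: "pml L \<Longrightarrow> maxcons L w \<Longrightarrow> Top \<in> w"
  by (rule maxcons_logic) (auto intro: pml_taut)

text \<open>The quantifier principles are substitution instances of classical theorems about a
  single unary predicate.\<close>

lemma pml_gen_fresh:
  assumes L: "pml L" and e1: "e \<notin> fv p" and e2: "e \<notin> vars \<theta>"
  shows "Imp (All e (Imp p (vsubst (id(x := e)) \<theta>))) (Imp p (All x \<theta>)) \<in> L"
proof -
  let ?S = "Imp (All e (Imp (Atom 1 []) (Atom 0 [e]))) (Imp (Atom 1 []) (All x (Atom 0 [x])))"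
  define \<sigma> :: psub where "\<sigma> = (\<lambda>i n. if i = 0 \<and> n = 1 then ([x], \<theta>) else ([], p))"
  have "CPL_thm ?S" unfolding CPL_thm_def Imp_def by auto
  then have "?S \<in> L" by (rule pml_CPL_thm[OF L])
  moreover have "psfree \<sigma> ?S"
  proof -
    have vf: "vfree (id(x := e)) \<theta>" by (rule vfree_if_bv) (use e2 in \<open>auto simp: vars_def\<close>)
    have "(fv \<theta> - {x}) \<inter> {e} = {}" using e2 by (auto simp: vars_def)
    moreover have "fv p \<inter> {e} = {}" using e1 by auto
    ultimately show ?thesis unfolding psfree_def Imp_def \<sigma>_def using vf by simp
  qed
  ultimately have "psubst \<sigma> ?S \<in> L" by (rule pml_psubst[OF L])
  moreover have "psubst \<sigma> ?S = Imp (All e (Imp p (vsubst (id(x := e)) \<theta>))) (Imp p (All x \<theta>))"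
    by (simp add: \<sigma>_def Imp_def)
  ultimately show ?thesis by simp
qed

lemma pml_All_inst:
  assumes L: "pml L" and vf: "vfree (id(x := d)) \<theta>"
  shows "Imp (All x \<theta>) (vsubst (id(x := d)) \<theta>) \<in> L"
proof -
  let ?S = "Imp (All x (Atom 0 [x])) (Atom 0 [d])"
  define \<sigma> :: psub where "\<sigma> = (\<lambda>i n. ([x], \<theta>))"
  have "CPL_thm ?S" unfolding CPL_thm_def Imp_def by auto
  then have "?S \<in> L" by (rule pml_CPL_thm[OF L])
  moreover have "psfree \<sigma> ?S"
    unfolding psfree_def Imp_def \<sigma>_def using vf by simp
  ultimately have "psubst \<sigma> ?S \<in> L" by (rule pml_psubst[OF L])
  moreover have "psubst \<sigma> ?S = Imp (All x \<theta>) (vsubst (id(x := d)) \<theta>)"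
    by (simp add: \<sigma>_def Imp_def)
  ultimately show ?thesis by simp
qed

lemma pml_All_inst_fresh:
  assumes L: "pml L" and d: "d \<notin> bv \<theta>"
  shows "Imp (All x \<theta>) (vsubst (id(x := d)) \<theta>) \<in> L"
proof -
  have vf: "vfree (id(x := d)) \<theta>" by (rule vfree_if_bv) (use d in auto)
  show ?thesis by (rule pml_All_inst[OF L vf])
qed

lemma pml_axM_inst:
  assumes L: "pml L" and M: "axM \<in> L"
  shows "Imp (Box (And a b)) (And (Box a) (Box b)) \<in> L"
proof -
  define \<sigma> :: psub where "\<sigma> = (\<lambda>i n. if i = 0 then ([], a) else ([], b))"
  have "psfree \<sigma> axM" unfolding psfree_def axM_def pp_def qq_def Imp_def \<sigma>_def by simp
  then have "psubst \<sigma> axM \<in> L" by (rule pml_psubst[OF L M])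
  moreover have "psubst \<sigma> axM = Imp (Box (And a b)) (And (Box a) (Box b))"
    by (simp add: \<sigma>_def Imp_def axM_def pp_def qq_def)
  ultimately show ?thesis by simp
qed

lemma pml_axC_inst:
  assumes L: "pml L" and C: "axC \<in> L"
  shows "Imp (And (Box a) (Box b)) (Box (And a b)) \<in> L"
proof -
  define \<sigma> :: psub where "\<sigma> = (\<lambda>i n. if i = 0 then ([], a) else ([], b))"
  have "psfree \<sigma> axC" unfolding psfree_def axC_def pp_def qq_def Imp_def \<sigma>_def by simp
  then have "psubst \<sigma> axC \<in> L" by (rule pml_psubst[OF L C])
  moreover have "psubst \<sigma> axC = Imp (And (Box a) (Box b)) (Box (And a b))"
    by (simp add: \<sigma>_def Imp_def axC_def pp_def qq_def)
  ultimately show ?thesis by simp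
qed

lemma pml_Box_mono:
  assumes L: "pml L" and M: "axM \<in> L" and ca: "Imp c a \<in> L"
  shows "Imp (Box c) (Box a) \<in> L"
proof -
  have "Iff c (And c a) \<in> L"
    using ca by (intro pml_prop_conseq[OF L, of "[Imp c a]"]) auto
  then have "Iff (Box c) (Box (And c a)) \<in> L"
    by (rule pml_Box_cong[OF L])
  then show ?thesis
    using pml_axM_inst[OF L M, of c a]
    by (intro pml_prop_conseq[OF L, of "[Iff (Box c) (Box (And c a)), Imp (Box (And c a)) (And (Box c) (Box a))]"]) auto
qed

section \<open>Lindenbaum's lemma with Henkin witnesses\<close>

lemma fv_Conj_subset: "fv (Conj as) \<subseteq> (\<Union>a\<in>set as. vars a)"
  by (induct as) (auto simp: vars_def)

lemma consistent_insert_witness: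
  assumes L: "pml L" and c: "consistent L (insert (Neg (All x \<theta>)) G)"
    and e: "e \<notin> (\<Union>g\<in>insert (Neg (All x \<theta>)) G. vars g)"
  shows "consistent L (insert (Neg (vsubst (id(x := e)) \<theta>)) (insert (Neg (All x \<theta>)) G))"
  unfolding consistent_def
proof (intro allI impI notI)
  fix gs
  assume gs: "set gs \<subseteq> insert (Neg (vsubst (id(x := e)) \<theta>)) (insert (Neg (All x \<theta>)) G)"
    and n: "Neg (Conj gs) \<in> L"
  let ?te = "vsubst (id(x := e)) \<theta>"
  let ?hs = "filter (\<lambda>g. g \<noteq> Neg ?te) gs"
  have hs: "set ?hs \<subseteq> insert (Neg (All x \<theta>)) G" using gs by auto
  have 1: "Imp (Conj ?hs) ?te \<in> L"
    by (rule pml_prop_conseq[OF L, of "[Neg (Conj gs)]"]) (use n in auto)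
  have 2: "All e (Imp (Conj ?hs) ?te) \<in> L" by (rule pml_All[OF L 1])
  have "(\<Union>a\<in>set ?hs. vars a) \<subseteq> (\<Union>g\<in>insert (Neg (All x \<theta>)) G. vars g)"
    by (rule UN_mono[OF hs order_refl])
  then have efv: "e \<notin> fv (Conj ?hs)" using fv_Conj_subset[of ?hs] e by blast
  have eth: "e \<notin> vars \<theta>" using e by (auto simp: vars_def)
  have 3: "Imp (Conj ?hs) (All x \<theta>) \<in> L"
    by (rule pml_MP[OF L 2 pml_gen_fresh[OF L efv eth]])
  have "Neg (Conj (Neg (All x \<theta>) # ?hs)) \<in> L"
    by (rule pml_prop_conseq[OF L, of "[Imp (Conj ?hs) (All x \<theta>)]"]) (use 3 in auto)
  moreover have "set (Neg (All x \<theta>) # ?hs) \<subseteq> insert (Neg (All x \<theta>)) G" using hs by simp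
  ultimately show False by (intro consistentD[OF c, of "Neg (All x \<theta>) # ?hs"])
qed

definition fresh_var :: "nat set \<Rightarrow> fm set \<Rightarrow> fm \<Rightarrow> nat" where
  "fresh_var E G f = (SOME e. e \<in> E \<and> e \<notin> (\<Union>g\<in>insert f G. vars g))"

fun witness :: "nat \<Rightarrow> fm \<Rightarrow> fm set" where
  "witness e (Neg (All x \<theta>)) = {Neg (vsubst (id(x := e)) \<theta>)}"
| "witness e _ = {}"

lemma witness_cases: "witness e f = {} \<or> (\<exists>x \<theta>. f = Neg (All x \<theta>) \<and> witness e f = {Neg (vsubst (id(x := e)) \<theta>)})"
proof (cases "\<exists>x \<theta>. f = Neg (All x \<theta>)")
  case True
  then obtain x \<theta> where f: "f = Neg (All x \<theta>)" by blast
  have "witness e f = {Neg (vsubst (id(x := e)) \<theta>)}" unfolding f by (simp only: witness.simps)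
  then show ?thesis using f by blast
next
  case False
  then have "witness e f = {}" by (induct e f rule: witness.induct) simp_all
  then show ?thesis by blast
qed

lemma finite_witness: "finite (witness e f)"
  by (induct e f rule: witness.induct) simp_all

text \<open>The witness variable is fresh for every formula added so far, which is what keeps
  the extension consistent.\<close>

definition lind_ext :: "fm set \<Rightarrow> nat set \<Rightarrow> fm set \<Rightarrow> nat \<Rightarrow> fm set" where
  "lind_ext L E G n = (if consistent L (insert (from_nat n) G)
     then witness (fresh_var E G (from_nat n)) (from_nat n) \<union> insert (from_nat n) G else G)"

primrec lind_chain :: "fm set \<Rightarrow> nat set \<Rightarrow> fm set \<Rightarrow> nat \<Rightarrow> fm set" where
  "lind_chain L E G0 0 = G0"
| "lind_chain L E G0 (Suc n) = lind_ext L E (lind_chain L E G0 n) n"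

definition lind :: "fm set \<Rightarrow> nat set \<Rightarrow> fm set \<Rightarrow> fm set" where
  "lind L E G0 = (\<Union>n. lind_chain L E G0 n)"

lemma fresh_var_props:
  assumes "infinite E" "finite G"
  shows "fresh_var E G f \<in> E \<and> fresh_var E G f \<notin> (\<Union>g\<in>insert f G. vars g)"
proof -
  have "finite (\<Union>g\<in>insert f G. vars g)" using assms(2) by simp
  then have "infinite (E - (\<Union>g\<in>insert f G. vars g))" using assms(1) by (rule Diff_infinite_finite)
  then have "E - (\<Union>g\<in>insert f G. vars g) \<noteq> {}" by (rule infinite_imp_nonempty)
  then obtain e where "e \<in> E - (\<Union>g\<in>insert f G. vars g)" by blast
  then have "\<exists>e. e \<in> E \<and> e \<notin> (\<Union>g\<in>insert f G. vars g)" by blast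
  then show ?thesis unfolding fresh_var_def by (rule someI_ex)
qed

lemma subset_lind_ext: "G \<subseteq> lind_ext L E G n"
  unfolding lind_ext_def by auto

lemma finite_lind_chain: "finite G0 \<Longrightarrow> finite (lind_chain L E G0 n)"
  by (induct n) (auto simp: lind_ext_def finite_witness)

lemma lind_chain_mono: "m \<le> n \<Longrightarrow> lind_chain L E G0 m \<subseteq> lind_chain L E G0 n"
  by (rule lift_Suc_mono_le[where f="lind_chain L E G0"]) (auto simp: subset_lind_ext)

lemma consistent_lind_chain:
  assumes L: "pml L" and E: "infinite E" and f0: "finite G0" and c0: "consistent L G0"
  shows "consistent L (lind_chain L E G0 n)"
proof (induct n)
  case 0 then show ?case using c0 by simp
next
  case (Suc n)
  let ?G = "lind_chain L E G0 n" and ?f = "from_nat n :: fm"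
  show ?case
  proof (cases "consistent L (insert ?f ?G)")
    case False
    then show ?thesis using Suc by (simp add: lind_ext_def)
  next
    case True
    let ?e = "fresh_var E ?G ?f"
    have fe: "?e \<notin> (\<Union>g\<in>insert ?f ?G. vars g)"
      using fresh_var_props[OF E finite_lind_chain[OF f0, of L E n], of ?f] by blast
    from witness_cases[of ?e ?f] show ?thesis
    proof
      assume "witness ?e ?f = {}"
      then show ?thesis using True by (simp add: lind_ext_def)
    next
      assume "\<exists>x \<theta>. ?f = Neg (All x \<theta>) \<and> witness ?e ?f = {Neg (vsubst (id(x := ?e)) \<theta>)}"
      then obtain x \<theta> where f: "?f = Neg (All x \<theta>)" and w: "witness ?e ?f = {Neg (vsubst (id(x := ?e)) \<theta>)}"
        by blast
      have "consistent L (insert (Neg (vsubst (id(x := ?e)) \<theta>)) (insert (Neg (All x \<theta>)) ?G))"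
        by (rule consistent_insert_witness[OF L]) (use True fe f in simp_all)
      then show ?thesis using True w f by (simp add: lind_ext_def insert_commute)
    qed
  qed
qed

lemma list_in_lind_chain: "set l \<subseteq> (\<Union>n. lind_chain L E G0 n) \<Longrightarrow> \<exists>n. set l \<subseteq> lind_chain L E G0 n"
proof (induct l)
  case Nil then show ?case by simp
next
  case (Cons a l)
  then obtain n where n: "set l \<subseteq> lind_chain L E G0 n" by auto
  obtain m where m: "a \<in> lind_chain L E G0 m" using Cons.prems by auto
  have "set (a # l) \<subseteq> lind_chain L E G0 (max n m)"
    using n m lind_chain_mono[of n "max n m" L E G0] lind_chain_mono[of m "max n m" L E G0] by auto
  then show ?case by blast
qed

lemma consistent_lind:
  assumes L: "pml L" and E: "infinite E" and f0: "finite G0" and c0: "consistent L G0"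
  shows "consistent L (lind L E G0)"
  unfolding consistent_def
proof (intro allI impI)
  fix gs assume "set gs \<subseteq> lind L E G0"
  then have "\<exists>n. set gs \<subseteq> lind_chain L E G0 n" unfolding lind_def by (rule list_in_lind_chain)
  then obtain n where "set gs \<subseteq> lind_chain L E G0 n" by (elim exE)
  then show "Neg (Conj gs) \<notin> L" using consistent_lind_chain[OF L E f0 c0, of n] unfolding consistent_def by blast
qed

lemma lind_chain_subset_lind: "lind_chain L E G0 n \<subseteq> lind L E G0"
  unfolding lind_def by blast

lemma from_nat_in_lind:
  assumes "consistent L (insert (from_nat n) (lind_chain L E G0 n))"
  shows "from_nat n \<in> lind L E G0"
proof -
  have "from_nat n \<in> lind_chain L E G0 (Suc n)" using assms by (simp add: lind_ext_def)
  then show ?thesis using lind_chain_subset_lind[of L E G0 "Suc n"] by blast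
qed

lemma maxcons_lind:
  assumes L: "pml L" and E: "infinite E" and f0: "finite G0" and c0: "consistent L G0"
  shows "maxcons L (lind L E G0)"
  unfolding maxcons_def
proof (intro conjI allI)
  show c: "consistent L (lind L E G0)" by (rule consistent_lind[OF assms])
  fix a
  show "a \<in> lind L E G0 \<or> Neg a \<in> lind L E G0"
  proof (rule ccontr)
    assume h: "\<not> (a \<in> lind L E G0 \<or> Neg a \<in> lind L E G0)"
    let ?n = "to_nat a" and ?m = "to_nat (Neg a)"
    have 1: "\<not> consistent L (insert a (lind_chain L E G0 ?n))"
      using from_nat_in_lind[of L ?n E G0] h by auto
    have 2: "\<not> consistent L (insert (Neg a) (lind_chain L E G0 ?m))"
      using from_nat_in_lind[of L ?m E G0] h by auto
    let ?k = "max ?n ?m"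
    have "\<not> consistent L (insert a (lind_chain L E G0 ?k))"
      using 1 consistent_mono[of "insert a (lind_chain L E G0 ?n)" "insert a (lind_chain L E G0 ?k)" L]
        lind_chain_mono[of ?n ?k L E G0] by auto
    moreover have "\<not> consistent L (insert (Neg a) (lind_chain L E G0 ?k))"
      using 2 consistent_mono[of "insert (Neg a) (lind_chain L E G0 ?m)" "insert (Neg a) (lind_chain L E G0 ?k)" L]
        lind_chain_mono[of ?m ?k L E G0] by auto
    ultimately show False using consistent_insert_or_Neg[OF L consistent_lind_chain[OF assms, of ?k], of a] by blast
  qed
qed

lemma lind_witnessed:
  assumes L: "pml L" and E: "infinite E" and f0: "finite G0" and c0: "consistent L G0"
    and h: "Neg (All x \<theta>) \<in> lind L E G0"
  shows "\<exists>e\<in>E. Neg (vsubst (id(x := e)) \<theta>) \<in> lind L E G0"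
proof -
  let ?f = "Neg (All x \<theta>)"
  let ?n = "to_nat ?f"
  let ?G = "lind_chain L E G0 ?n"
  have "insert ?f ?G \<subseteq> lind L E G0" using h lind_chain_subset_lind[of L E G0 ?n] by blast
  then have c: "consistent L (insert ?f ?G)" using consistent_lind[OF L E f0 c0] by (rule consistent_mono)
  let ?e = "fresh_var E ?G ?f"
  have eE: "?e \<in> E" using fresh_var_props[OF E finite_lind_chain[OF f0, of L E ?n], of ?f] by blast
  have "Neg (vsubst (id(x := ?e)) \<theta>) \<in> lind_chain L E G0 (Suc ?n)" using c by (simp add: lind_ext_def)
  then show ?thesis using eE lind_chain_subset_lind[of L E G0 "Suc ?n"] by blast
qed

lemma subset_lind: "G0 \<subseteq> lind L E G0"
  using lind_chain_subset_lind[of L E G0 0] by simp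

section \<open>The canonical model\<close>

definition canon_worlds :: "fm set \<Rightarrow> nat set \<Rightarrow> fm set set" where
  "canon_worlds L E = {w. maxcons L w \<and>
     (\<forall>x \<theta>. Neg (All x \<theta>) \<in> w \<longrightarrow> (\<exists>e \<in> E. Neg (vsubst (id(x := e)) \<theta>) \<in> w))}"

definition proof_set :: "fm set \<Rightarrow> nat set \<Rightarrow> fm \<Rightarrow> fm set set" where
  "proof_set L E a = {w \<in> canon_worlds L E. a \<in> w}"

text \<open>Thanks to the congruence rule for \<open>Box\<close> (and to axiom M in the monotonic case),
  membership of \<open>Box a\<close> in a world depends only on the proof set of \<open>a\<close>.\<close>

definition canon_nbhd :: "mprop set \<Rightarrow> fm set \<Rightarrow> nat set \<Rightarrow> fm set \<Rightarrow> fm set set set" where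
  "canon_nbhd P L E w = (if Monotonic \<in> P
     then {X. X \<subseteq> canon_worlds L E \<and> (\<exists>c. Box c \<in> w \<and> proof_set L E c \<subseteq> X)}
     else {X. \<exists>c. Box c \<in> w \<and> X = proof_set L E c})"

definition canon_interp :: "nat set \<Rightarrow> fm set \<Rightarrow> nat \<Rightarrow> nat \<Rightarrow> nat list set" where
  "canon_interp E w i n = {l. length l = n \<and> set l \<subseteq> E \<and> Atom i l \<in> w}"

lemma proof_set_subset: "proof_set L E a \<subseteq> canon_worlds L E"
  unfolding proof_set_def by blast

lemma canon_worlds_maxcons: "w \<in> canon_worlds L E \<Longrightarrow> maxcons L w"
  unfolding canon_worlds_def by blast

lemma exists_canon_world:
  assumes L: "pml L" and E: "infinite E" and a: "a \<notin> L"
  shows "\<exists>w \<in> canon_worlds L E. Neg a \<in> w"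
proof -
  have c: "consistent L {Neg a}"
    unfolding consistent_def
  proof (intro allI impI notI)
    fix gs
    assume "set gs \<subseteq> {Neg a}" "Neg (Conj gs) \<in> L"
    then have "a \<in> L"
      by (intro pml_prop_conseq[OF L, of "[Neg (Conj gs)]"]) auto
    then show False using a by blast
  qed
  let ?w = "lind L E {Neg a}"
  have "?w \<in> canon_worlds L E"
    unfolding canon_worlds_def using maxcons_lind[OF L E _ c] lind_witnessed[OF L E _ c] by simp
  moreover have "Neg a \<in> ?w" using subset_lind[of "{Neg a}" L E] by blast
  ultimately show ?thesis by blast
qed

lemma Imp_if_proof_set_subset:
  assumes L: "pml L" and E: "infinite E" and s: "proof_set L E a \<subseteq> proof_set L E b"
  shows "Imp a b \<in> L"
proof (rule ccontr)
  assume "Imp a b \<notin> L"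
  then obtain w where w: "w \<in> canon_worlds L E" "Neg (Imp a b) \<in> w"
    using exists_canon_world[OF L E] by blast
  have m: "maxcons L w" using w(1) by (rule canon_worlds_maxcons)
  have "a \<in> w" by (rule maxcons_prop_conseq[OF L m, of "[Neg (Imp a b)]"]) (use w in auto)
  then have "b \<in> w" using s w(1) unfolding proof_set_def by blast
  then have "Imp a b \<in> w" by (intro maxcons_prop_conseq[OF L m, of "[b]"]) auto
  then show False using w(2) maxcons_Neg[OF L m] by blast
qed

lemma Iff_if_proof_set_eq:
  assumes L: "pml L" and E: "infinite E" and s: "proof_set L E a = proof_set L E b"
  shows "Iff a b \<in> L"
proof -
  have "Imp a b \<in> L" "Imp b a \<in> L"
    by (rule Imp_if_proof_set_subset[OF L E], use s in simp)+
  then show ?thesis by (intro pml_prop_conseq[OF L, of "[Imp a b, Imp b a]"]) auto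
qed

lemma proof_set_And: "pml L \<Longrightarrow> proof_set L E (And a b) = proof_set L E a \<inter> proof_set L E b"
  unfolding proof_set_def using maxcons_And canon_worlds_maxcons by blast

lemma proof_set_Neg: "pml L \<Longrightarrow> proof_set L E (Neg a) = canon_worlds L E - proof_set L E a"
  unfolding proof_set_def using maxcons_Neg canon_worlds_maxcons by blast

lemma proof_set_Top: "pml L \<Longrightarrow> proof_set L E Top = canon_worlds L E"
  unfolding proof_set_def using maxcons_Top canon_worlds_maxcons by blast

lemma proof_set_Bot: "pml L \<Longrightarrow> proof_set L E Bot = {}"
proof -
  assume L: "pml L"
  have "Neg Bot \<in> w" if "w \<in> canon_worlds L E" for w
    using maxcons_logic[OF L canon_worlds_maxcons[OF that] pml_taut[OF L]] by simp
  then show ?thesis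
    unfolding proof_set_def using maxcons_Neg[OF L] canon_worlds_maxcons by blast
qed

lemma proof_set_in_canon_nbhd_iff:
  assumes L: "pml L" and E: "infinite E" and lh: "logic_has P L" and w: "w \<in> canon_worlds L E"
  shows "proof_set L E a \<in> canon_nbhd P L E w \<longleftrightarrow> Box a \<in> w"
proof
  have m: "maxcons L w" using w by (rule canon_worlds_maxcons)
  assume "proof_set L E a \<in> canon_nbhd P L E w"
  then obtain c where c: "Box c \<in> w"
    and ca: "if Monotonic \<in> P then Imp c a \<in> L else Iff c a \<in> L"
    unfolding canon_nbhd_def
    using Imp_if_proof_set_subset[OF L E] Iff_if_proof_set_eq[OF L E] by (auto split: if_splits)
  show "Box a \<in> w"
  proof (cases "Monotonic \<in> P")
    case True
    then have "Imp (Box c) (Box a) \<in> L"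
      using pml_Box_mono[OF L] lh ca unfolding logic_has_def by simp
    then show ?thesis by (rule maxcons_MP[OF L m c])
  next
    case False
    then have "Iff (Box c) (Box a) \<in> L"
      using pml_Box_cong[OF L] ca by simp
    then show ?thesis
      using maxcons_logic[OF L m] c by (intro maxcons_prop_conseq[OF L m, of "[Box c, Iff (Box c) (Box a)]"]) auto
  qed
next
  assume "Box a \<in> w"
  then show "proof_set L E a \<in> canon_nbhd P L E w"
    using proof_set_subset[of L E a] unfolding canon_nbhd_def by auto
qed

lemma canon_All_iff:
  assumes L: "pml L" and w: "w \<in> canon_worlds L E" and bv: "bv \<theta> \<inter> E = {}"
  shows "All x \<theta> \<in> w \<longleftrightarrow> (\<forall>d \<in> E. vsubst (id(x := d)) \<theta> \<in> w)"
proof -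
  have m: "maxcons L w" using w by (rule canon_worlds_maxcons)
  show ?thesis
  proof
    assume "All x \<theta> \<in> w"
    moreover have "Imp (All x \<theta>) (vsubst (id(x := d)) \<theta>) \<in> L" if "d \<in> E" for d
      using pml_All_inst_fresh[OF L] bv that by blast
    ultimately show "\<forall>d \<in> E. vsubst (id(x := d)) \<theta> \<in> w"
      using maxcons_MP[OF L m] by blast
  next
    assume all: "\<forall>d \<in> E. vsubst (id(x := d)) \<theta> \<in> w"
    show "All x \<theta> \<in> w"
    proof (rule ccontr)
      assume "All x \<theta> \<notin> w"
      then have "Neg (All x \<theta>) \<in> w" using maxcons_Neg[OF L m] by blast
      then obtain e where "e \<in> E" "Neg (vsubst (id(x := e)) \<theta>) \<in> w"
        using w unfolding canon_worlds_def by blast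
      then show False using all maxcons_Neg[OF L m] by blast
    qed
  qed
qed

lemma vsubst_upd_vsubst:
  assumes "\<forall>v. s v \<noteq> x" "vfree (s(x := x)) a"
  shows "vsubst (id(x := d)) (vsubst (s(x := x)) a) = vsubst (s(x := d)) a"
proof -
  have "id(x := d) \<circ> s(x := x) = s(x := d)"
    using assms(1) by (auto simp: fun_eq_iff)
  then show ?thesis using vsubst_vsubst[OF assms(2)] by simp
qed

text \<open>The individuals of the canonical model are the variables outside a finite set \<open>K\<close>
  which contains all bound variables of the formula, so that substituting individuals for
  its free variables never causes capture.\<close>

lemma canon_truth:
  assumes L: "pml L" and lh: "logic_has P L" and K: "finite K"
  shows "bv \<psi> \<subseteq> K \<Longrightarrow> \<forall>v. s v \<notin> K \<Longrightarrow>
    truth (canon_worlds L (-K)) (canon_nbhd P L (-K)) (-K) (canon_interp (-K)) s \<psi>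
      = proof_set L (-K) (vsubst s \<psi>)"
proof (induct \<psi> arbitrary: s)
  case (Atom i ys)
  then show ?case unfolding proof_set_def canon_interp_def by auto
next
  case (And a b)
  then show ?case using proof_set_And[OF L] by simp
next
  case (Neg a)
  then show ?case using proof_set_Neg[OF L] by simp
next
  case (Box a)
  have E: "infinite (-K)" using K by (simp add: Compl_eq_Diff_UNIV Diff_infinite_finite)
  show ?case
    using Box proof_set_in_canon_nbhd_iff[OF L E lh] unfolding proof_set_def by auto
next
  case (All x a)
  let ?C = "canon_worlds L (-K)"
  have bva: "bv a \<subseteq> K" and xK: "x \<in> K" using All.prems(1) by auto
  have vf: "vfree (s(x := x)) a"
    by (rule vfree_if_bv) (use All.prems(2) bva in auto)
  have s: "\<forall>v. s v \<noteq> x" using All.prems(2) xK by auto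
  have "truth ?C (canon_nbhd P L (-K)) (-K) (canon_interp (-K)) s (All x a)
      = {w \<in> ?C. \<forall>d \<in> -K. vsubst (s(x := d)) a \<in> w}"
    using All.hyps[OF bva] All.prems(2) unfolding proof_set_def by auto
  also have "\<dots> = {w \<in> ?C. All x (vsubst (s(x := x)) a) \<in> w}"
    using canon_All_iff[OF L, of _ "-K" "vsubst (s(x := x)) a" x] bva
      vsubst_upd_vsubst[OF s vf] by auto
  finally show ?case unfolding proof_set_def by simp
qed (simp_all add: proof_set_Top[OF L] proof_set_Bot[OF L])

section \<open>Completeness\<close>

lemma pml_Inter: "(\<And>L. L \<in> Ls \<Longrightarrow> pml L) \<Longrightarrow> pml (\<Inter>Ls)"
  unfolding pml_def by blast

lemma logic_has_Inter: "(\<And>L. L \<in> Ls \<Longrightarrow> logic_has P L) \<Longrightarrow> logic_has P (\<Inter>Ls)"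
  unfolding logic_has_def by blast

lemma pml_LP: "pml (LP P)"
  unfolding LP_def by (rule pml_Inter) blast

lemma logic_has_LP: "logic_has P (LP P)"
  unfolding LP_def by (rule logic_has_Inter) blast

lemma maxcons_Box_And:
  assumes L: "pml L" and C: "axC \<in> L" and m: "maxcons L w" and "Box a \<in> w" "Box b \<in> w"
  shows "Box (And a b) \<in> w"
  using assms(4,5) maxcons_logic[OF L m pml_axC_inst[OF L C, of a b]]
  by (intro maxcons_prop_conseq[OF L m, of "[Box a, Box b, Imp (And (Box a) (Box b)) (Box (And a b))]"]) auto

lemma canon_nbhd_Int:
  assumes L: "pml L" and C: "axC \<in> L" and w: "w \<in> canon_worlds L E"
    and X: "X \<in> canon_nbhd P L E w" and Y: "Y \<in> canon_nbhd P L E w"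
  shows "X \<inter> Y \<in> canon_nbhd P L E w"
proof -
  have box: "Box (And a b) \<in> w" if "Box a \<in> w" "Box b \<in> w" for a b
    using maxcons_Box_And[OF L C canon_worlds_maxcons[OF w] that] .
  show ?thesis
  proof (cases "Monotonic \<in> P")
    case True
    obtain a b where ab: "Box a \<in> w" "Box b \<in> w" "proof_set L E a \<subseteq> X" "proof_set L E b \<subseteq> Y"
      and "X \<subseteq> canon_worlds L E"
      using X Y True unfolding canon_nbhd_def by auto
    have "Box (And a b) \<in> w" using box ab(1,2) .
    moreover have "proof_set L E (And a b) \<subseteq> X \<inter> Y"
      using ab(3,4) proof_set_And[OF L, of E a b] by blast
    moreover have "X \<inter> Y \<subseteq> canon_worlds L E" using \<open>X \<subseteq> canon_worlds L E\<close> by blast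
    ultimately show ?thesis using True unfolding canon_nbhd_def by auto
  next
    case False
    obtain a b where "Box a \<in> w" "X = proof_set L E a" "Box b \<in> w" "Y = proof_set L E b"
      using X Y False unfolding canon_nbhd_def by auto
    then show ?thesis
      using False box proof_set_And[OF L, of E a b] unfolding canon_nbhd_def by auto
  qed
qed

lemma canon_nbhd_Inter:
  assumes L: "pml L" and C: "axC \<in> L" and w: "w \<in> canon_worlds L E"
  shows "finite F \<Longrightarrow> F \<noteq> {} \<Longrightarrow> F \<subseteq> canon_nbhd P L E w \<Longrightarrow> \<Inter>F \<in> canon_nbhd P L E w"
proof (induct F rule: finite_ne_induct)
  case (insert X F)
  then show ?case using canon_nbhd_Int[OF L C w] by simp
qed simp

lemma canon_nframe: "canon_worlds L E \<noteq> {} \<Longrightarrow> nframe (canon_worlds L E) (canon_nbhd P L E)"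
  unfolding nframe_def canon_nbhd_def using proof_set_subset[of L E] by auto

lemma canon_frame_has:
  assumes L: "pml L" and lh: "logic_has P L" and E: "infinite E"
  shows "frame_has P (canon_worlds L E) (canon_nbhd P L E)"
  unfolding frame_has_def
proof (intro conjI impI ballI allI)
  fix c X Y
  assume M: "Monotonic \<in> P" and "X \<in> canon_nbhd P L E c" and XY: "X \<subseteq> Y \<and> Y \<subseteq> canon_worlds L E"
  then obtain a where a: "Box a \<in> c" "proof_set L E a \<subseteq> X"
    unfolding canon_nbhd_def by auto
  then have "proof_set L E a \<subseteq> Y" using XY by blast
  then show "Y \<in> canon_nbhd P L E c"
    using M XY a(1) unfolding canon_nbhd_def by auto
next
  fix c
  assume "Topped \<in> P" and c: "c \<in> canon_worlds L E"
  then have "Box Top \<in> c"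
    using lh maxcons_logic[OF L canon_worlds_maxcons[OF c]] unfolding logic_has_def axN_def by blast
  then have "proof_set L E Top \<in> canon_nbhd P L E c"
    using proof_set_in_canon_nbhd_iff[OF L E lh c] by blast
  then show "canon_worlds L E \<in> canon_nbhd P L E c"
    by (simp only: proof_set_Top[OF L])
next
  fix c F
  assume "Cufi \<in> P" "c \<in> canon_worlds L E" "finite F \<and> F \<noteq> {} \<and> F \<subseteq> canon_nbhd P L E c"
  then show "\<Inter>F \<in> canon_nbhd P L E c"
    using canon_nbhd_Inter[OF L] lh unfolding logic_has_def by blast
qed

fun univ_closure :: "nat list \<Rightarrow> fm \<Rightarrow> fm" where
  "univ_closure [] a = a"
| "univ_closure (x # xs) a = All x (univ_closure xs a)"

lemma fv_univ_closure: "fv (univ_closure xs a) = fv a - set xs"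
  by (induct xs) auto

lemma pml_univ_closureD: "pml L \<Longrightarrow> univ_closure xs a \<in> L \<Longrightarrow> a \<in> L"
proof (induct xs)
  case (Cons x xs)
  have "Imp (All x (univ_closure xs a)) (vsubst (id(x := x)) (univ_closure xs a)) \<in> L"
    by (rule pml_All_inst[OF Cons.prems(1)]) simp
  then have "Imp (All x (univ_closure xs a)) (univ_closure xs a) \<in> L" by simp
  moreover have "All x (univ_closure xs a) \<in> L" using Cons.prems(2) by simp
  ultimately have "univ_closure xs a \<in> L" using pml_MP[OF Cons.prems(1)] by blast
  then show ?case using Cons by blast
qed simp

lemma truth_univ_closure:
  assumes "\<And>A. \<forall>v. A v \<in> D \<Longrightarrow> truth C V D I A a = C"
  shows "\<forall>v. A v \<in> D \<Longrightarrow> truth C V D I A (univ_closure xs a) = C"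
proof (induct xs arbitrary: A)
  case (Cons x xs)
  have "truth C V D I (A(x := d)) (univ_closure xs a) = C" if "d \<in> D" for d
    by (rule Cons.hyps) (use Cons.prems that in simp)
  then show ?case by (auto simp del: fun_upd_apply)
qed (use assms in simp)

text \<open>The canonical model refutes the universal closure of a non-theorem; the closure is
  needed because the free variables of the formula may also occur bound in it.\<close>

theorem LP_completeness:
  assumes valid: "\<forall>(C :: fm set set) V. nframe C V \<and> frame_has P C V \<longrightarrow> fvalid C V TYPE(nat) \<phi>"
  shows "\<phi> \<in> LP P"
proof (rule ccontr)
  assume "\<phi> \<notin> LP P"
  define \<Phi> where "\<Phi> = univ_closure (sorted_list_of_set (fv \<phi>)) \<phi>"
  define K where "K = bv \<Phi>"
  let ?L = "LP P" and ?E = "- K"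
  let ?C = "canon_worlds ?L ?E" and ?V = "canon_nbhd P ?L ?E" and ?I = "canon_interp ?E"
  have L: "pml ?L" and lh: "logic_has P ?L" by (rule pml_LP, rule logic_has_LP)
  have K: "finite K" unfolding K_def by simp
  then have E: "infinite ?E" by (simp add: Compl_eq_Diff_UNIV Diff_infinite_finite)
  then obtain e where e: "e \<notin> K" using infinite_imp_nonempty by auto
  have "\<Phi> \<notin> ?L" using pml_univ_closureD[OF L] \<open>\<phi> \<notin> LP P\<close> unfolding \<Phi>_def by blast
  then obtain w where w: "w \<in> ?C" "Neg \<Phi> \<in> w" using exists_canon_world[OF L E] by blast
  then have "fvalid ?C ?V TYPE(nat) \<phi>"
    using valid canon_nframe[of ?L ?E P] canon_frame_has[OF L lh E] by blast
  moreover have "is_model ?C ?E ?I" unfolding is_model_def canon_interp_def using e by auto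
  ultimately have "truth ?C ?V ?E ?I (\<lambda>_. e) \<Phi> = ?C"
    unfolding \<Phi>_def fvalid_def using e by (intro truth_univ_closure) auto
  moreover have "truth ?C ?V ?E ?I (\<lambda>_. e) \<Phi> = proof_set ?L ?E (vsubst (\<lambda>_. e) \<Phi>)"
    by (rule canon_truth[OF L lh K]) (use e in \<open>simp_all add: K_def\<close>)
  moreover have "fv \<Phi> = {}" unfolding \<Phi>_def by (simp add: fv_univ_closure)
  then have "vsubst (\<lambda>_. e) \<Phi> = vsubst id \<Phi>" by (intro vsubst_cong) simp
  ultimately have "proof_set ?L ?E \<Phi> = ?C" by simp
  then have "\<Phi> \<in> w" using w(1) unfolding proof_set_def by blast
  then show False using w(2) maxcons_Neg[OF L canon_worlds_maxcons[OF w(1)]] by blast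
qed

theorem mainTheorem9:
  fixes P :: "mprop set" and \<phi> :: fm
  shows "(\<phi> \<in> LP P \<longrightarrow>
            (\<forall>(C :: 'w set) V. nframe C V \<and> frame_has P C V \<longrightarrow> fvalid C V TYPE('d) \<phi>))
       \<and> ((\<forall>(C :: fm set set) V. nframe C V \<and> frame_has P C V \<longrightarrow> fvalid C V TYPE(nat) \<phi>)
            \<longrightarrow> \<phi> \<in> LP P)"
proof (intro conjI impI)
  assume "\<phi> \<in> LP P"
  then have "\<phi> \<in> valid_fms P TYPE('w) TYPE('d)"
    using LP_subset_valid_fms by blast
  then show "\<forall>(C :: 'w set) V. nframe C V \<and> frame_has P C V \<longrightarrow> fvalid C V TYPE('d) \<phi>"
    unfolding valid_fms_def by simp
qed (rule LP_completeness)

end
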